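(* Let $0<\alpha<1$ and let $f\in L^1_{1-\alpha}([0,1[)$ be locally contracting on $[0,1[$ with $f(0)=0$. Then $(D_\alpha f)(0)$ exists and equals $0$.
   Context: Fourier coefficients: $\widehat h(s)=\frac1{2\pi}\int_{-\pi}^{\pi}h(\theta)e^{-is\theta}d\theta$; $T_N(h)$ is the $(N+1)\times(N+1)$ matrix with $(T_N(h))_{k+1,l+1}=\widehat h(k-l)$, $0\le k,l\le N$. $\varphi_{\alpha,R}(\theta)=(1-Re^{i\theta})^{\alpha}(1+Re^{-i\theta})^{\alpha}$ (principal branch), $\varphi_\alpha=\lim_{R\to1^-}\varphi_{\alpha,R}$. For $f$ on $[0,1[$ (with $f(1)$ set to $0$ since it is not defined), $X_N\in\mathbb R^{N+1}$ with $(X_N)_l=f(l/N)$. $f$ is $\alpha$-derivable at $x\in[0,1]$ if $\lim_{N\to+\infty}N^{\alpha}\sum_{l=0}^{N}(T_N(\varphi_\alpha))_{k+1,l+1}(X_N)_l$, $k=[Nx]$, exists and is finite; its value is $(D_\alpha f)(x)$. Locally contracting on $[0,1[$: Lipschitz on every compact interval contained in $[0,1[$. $f\in L^1_{1-\alpha}([0,1[)$ means there is $\gamma\in[0,1-\alpha]$ with $f(x)=O(x^{-\gamma})$ and $f(1-x)=O(x^{-\gamma})$ as $x\to0^+$. *)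

theory Defs
  imports "HOL-Analysis.Analysis" "HOL-Library.Landau_Symbols"
begin

definition fourier_coeff :: "(real \<Rightarrow> complex) \<Rightarrow> int \<Rightarrow> complex" where
  "fourier_coeff h s =
     complex_of_real (1 / (2 * pi)) *
     integral {-pi..pi} (\<lambda>\<theta>. h \<theta> * exp (- \<i> * of_int s * of_real \<theta>))"

text \<open>Entry (k+1,l+1) of the Toeplitz matrix T_N(h), for 0 <= k,l <= N.\<close>
definition toeplitz_entry :: "(real \<Rightarrow> complex) \<Rightarrow> nat \<Rightarrow> nat \<Rightarrow> complex" where
  "toeplitz_entry h k l = fourier_coeff h (int k - int l)"

definition phi_R :: "real \<Rightarrow> real \<Rightarrow> real \<Rightarrow> complex" where
  "phi_R \<alpha> R \<theta> =
     (1 - of_real R * exp (\<i> * of_real \<theta>)) powr (of_real \<alpha>) *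
     (1 + of_real R * exp (- \<i> * of_real \<theta>)) powr (of_real \<alpha>)"

definition phi :: "real \<Rightarrow> real \<Rightarrow> complex" where
  "phi \<alpha> \<theta> = Lim (at_left 1) (\<lambda>R. phi_R \<alpha> R \<theta>)"

definition XN :: "(real \<Rightarrow> real) \<Rightarrow> nat \<Rightarrow> nat \<Rightarrow> real" where
  "XN f N l = (if l = N then 0 else f (real l / real N))"

definition alpha_seq :: "real \<Rightarrow> (real \<Rightarrow> real) \<Rightarrow> real \<Rightarrow> nat \<Rightarrow> complex" where
  "alpha_seq \<alpha> f x N =
     of_real (real N powr \<alpha>) *
     (\<Sum>l = 0..N. toeplitz_entry (phi \<alpha>) (nat \<lfloor>real N * x\<rfloor>) l * of_real (XN f N l))"

definition alpha_derivable :: "real \<Rightarrow> (real \<Rightarrow> real) \<Rightarrow> real \<Rightarrow> bool" where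
  "alpha_derivable \<alpha> f x \<longleftrightarrow> (\<exists>L. alpha_seq \<alpha> f x \<longlonglongrightarrow> L)"

definition D_alpha :: "real \<Rightarrow> (real \<Rightarrow> real) \<Rightarrow> real \<Rightarrow> complex" where
  "D_alpha \<alpha> f x = lim (alpha_seq \<alpha> f x)"

definition locally_contracting :: "(real \<Rightarrow> real) \<Rightarrow> bool" where
  "locally_contracting f \<longleftrightarrow>
     (\<forall>a b. {a..b} \<subseteq> {0..<1} \<longrightarrow> (\<exists>L. L-lipschitz_on {a..b} f))"

definition L1_weight :: "real \<Rightarrow> (real \<Rightarrow> real) \<Rightarrow> bool" where
  "L1_weight \<beta> f \<longleftrightarrow>
     (\<exists>\<gamma>\<in>{0..\<beta>}. f \<in> O[at_right 0](\<lambda>x. x powr (-\<gamma>)) \<and>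
                   (\<lambda>x. f (1 - x)) \<in> O[at_right 0](\<lambda>x. x powr (-\<gamma>)))"

end

theory Submission
  imports Defs
begin

text \<open>
  Write \<open>c\<^sub>l\<close> for the Fourier coefficient of \<open>\<phi>\<^sub>\<alpha>\<close> at \<open>-l\<close>, so that the first entry of
  \<open>T\<^sub>N(\<phi>\<^sub>\<alpha>) X\<^sub>N\<close> is \<open>\<Sum>\<^sub>l c\<^sub>l f(l/N)\<close>. Multiplying the binomial series of the two factors
  of \<open>\<phi>\<^sub>\<alpha>\<^sub>,\<^sub>R\<close> and letting \<open>R \<rightarrow> 1\<close> gives \<open>c\<^sub>l = O(l\<^sup>-\<^sup>1\<^sup>-\<^sup>\<alpha>)\<close> and, because
  \<open>(\<alpha> gchoose (m - 1)) + (\<alpha> gchoose m) = (\<alpha> + 1) gchoose m\<close>, \<open>c\<^sub>l + c\<^sub>l\<^sub>+\<^sub>1 = O(l\<^sup>-\<^sup>2\<^sup>-\<^sup>\<alpha>)\<close>.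

  Split the sum at \<open>l \<approx> N(1 - \<delta>)\<close>. Below the split \<open>f\<close> is Lipschitz with \<open>f(0) = 0\<close>, and
  summing the terms in consecutive pairs shows that this part is \<open>O(1/N)\<close>. Above it
  \<open>f(1 - y) = O(y\<^sup>-\<^sup>\<gamma>)\<close> with \<open>\<gamma> < 1\<close> and \<open>c\<^sub>l = O(N\<^sup>-\<^sup>1\<^sup>-\<^sup>\<alpha>)\<close>, so this part is
  \<open>O(N\<^sup>-\<^sup>\<alpha> \<delta>\<^sup>1\<^sup>-\<^sup>\<gamma>)\<close>. Hence \<open>N\<^sup>\<alpha>\<close> times the sum is \<open>O(N\<^sup>\<alpha>\<^sup>-\<^sup>1) + O(\<delta>\<^sup>1\<^sup>-\<^sup>\<gamma>)\<close>,
  which tends to \<open>0\<close> as \<open>N \<rightarrow> \<infinity>\<close> and then \<open>\<delta> \<rightarrow> 0\<close>.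
\<close>

section \<open>Generalized binomial coefficients\<close>

lemma abs_gbinomial_le_powr:
  fixes \<beta> :: real
  obtains K where "K \<ge> 0" "\<And>m. m \<ge> 1 \<Longrightarrow> \<bar>\<beta> gchoose m\<bar> \<le> K * real m powr (-1 - \<beta>)"
proof -
  define u where "u = (\<lambda>n. \<bar>\<beta> gchoose n\<bar> * real n powr (1 + \<beta>))"
  have "(\<lambda>n. norm ((\<beta> gchoose n) / ((-1)^n / exp ((\<beta>+1) * of_real (ln (real n))))))
          \<longlonglongrightarrow> norm (inverse (Gamma (- \<beta>)))"
    by (intro tendsto_norm gbinomial_asymptotic)
  moreover have "eventually (\<lambda>n. norm ((\<beta> gchoose n) / ((-1)^n / exp ((\<beta>+1) * of_real (ln (real n))))) = u n) sequentially"
    using eventually_ge_at_top[of 1] by eventually_elim (simp add: u_def powr_def abs_mult add_ac)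
  ultimately have "convergent u"
    unfolding convergent_def by (blast intro: Lim_transform_eventually)
  from convergent_imp_Bseq[OF this] obtain K where K: "K > 0" "\<And>n. norm (u n) \<le> K"
    by (auto simp: Bseq_def)
  show ?thesis
  proof (rule that[of K])
    fix m :: nat assume "m \<ge> 1"
    then have "\<bar>\<beta> gchoose m\<bar> = u m * real m powr (-1 - \<beta>)"
      by (simp add: u_def mult.assoc powr_add[symmetric])
    also have "\<dots> \<le> K * real m powr (-1 - \<beta>)"
      using K(2)[of m] by (intro mult_right_mono) (auto simp: u_def)
    finally show "\<bar>\<beta> gchoose m\<bar> \<le> K * real m powr (-1 - \<beta>)" .
  qed (use K in simp)
qed

lemma summable_abs_gbinomial:
  fixes \<beta> :: real
  assumes "\<beta> > 0"
  shows "summable (\<lambda>n. \<bar>\<beta> gchoose n\<bar>)"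
proof -
  obtain K where K: "\<And>m. m \<ge> 1 \<Longrightarrow> \<bar>\<beta> gchoose m\<bar> \<le> K * real m powr (-1 - \<beta>)"
    using abs_gbinomial_le_powr by blast
  have "summable (\<lambda>n. K * real n powr (-1 - \<beta>))"
    using assms by (intro summable_mult) (simp add: summable_real_powr_iff)
  then show ?thesis
    by (rule summable_comparison_test_ev[rotated])
       (use eventually_ge_at_top[of 1] in \<open>eventually_elim, use K in auto\<close>)
qed

lemma gbinomial_dominated_series:
  fixes \<beta> :: real and g :: "nat \<Rightarrow> real"
  assumes "\<beta> > 0" "\<And>n. \<bar>g n\<bar> \<le> \<bar>\<beta> gchoose n\<bar> * B"
  shows "summable g" "\<bar>suminf g\<bar> \<le> (\<Sum>n. \<bar>\<beta> gchoose n\<bar>) * B"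
proof -
  have S: "summable (\<lambda>n. \<bar>\<beta> gchoose n\<bar> * B)"
    using summable_abs_gbinomial[OF assms(1)] by (rule summable_mult2)
  then show "summable g"
    by (rule summable_comparison_test') (use assms(2) in simp)
  have "\<bar>suminf g\<bar> \<le> (\<Sum>n. \<bar>\<beta> gchoose n\<bar> * B)"
    using norm_suminf_le[of g "\<lambda>n. \<bar>\<beta> gchoose n\<bar> * B"] S assms(2) by simp
  also have "\<dots> = (\<Sum>n. \<bar>\<beta> gchoose n\<bar>) * B"
    by (rule suminf_mult2[symmetric]) (rule summable_abs_gbinomial[OF assms(1)])
  finally show "\<bar>suminf g\<bar> \<le> (\<Sum>n. \<bar>\<beta> gchoose n\<bar>) * B" .
qed

text \<open>The coefficient of \<open>e\<^sup>i\<^sup>l\<^sup>\<theta>\<close> in the product of the binomial series of the two factors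
  of \<open>phi_R \<alpha> R\<close>.\<close>
definition phi_coeff :: "real \<Rightarrow> real \<Rightarrow> nat \<Rightarrow> real" where
  "phi_coeff \<alpha> R l = (\<Sum>n. (\<alpha> gchoose n) * (-R)^n * ((\<alpha> gchoose (n + l)) * R^(n + l)))"

lemma abs_power_mult_power_le_one: "0 \<le> R \<Longrightarrow> R \<le> 1 \<Longrightarrow> \<bar>(-R)^n * R^k\<bar> \<le> 1" for R :: real
  by (simp add: abs_mult power_abs power_le_one mult_le_one)

lemma phi_coeff_term_bound:
  fixes \<alpha> R :: real
  assumes "0 \<le> R" "R \<le> 1" "\<bar>\<alpha> gchoose (n + l)\<bar> \<le> M"
  shows "\<bar>(\<alpha> gchoose n) * (-R)^n * ((\<alpha> gchoose (n + l)) * R^(n + l))\<bar> \<le> \<bar>\<alpha> gchoose n\<bar> * M"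
proof -
  have "\<bar>(\<alpha> gchoose n) * (-R)^n * ((\<alpha> gchoose (n + l)) * R^(n + l))\<bar>
      = \<bar>\<alpha> gchoose n\<bar> * (\<bar>(-R)^n * R^(n + l)\<bar> * \<bar>\<alpha> gchoose (n + l)\<bar>)"
    by (simp add: abs_mult)
  also have "\<dots> \<le> \<bar>\<alpha> gchoose n\<bar> * (1 * M)"
    using abs_power_mult_power_le_one[OF assms(1,2)] assms(3) by (intro mult_left_mono mult_mono) auto
  finally show ?thesis by simp
qed

lemma summable_phi_coeff:
  fixes \<alpha> R :: real
  assumes "\<alpha> > 0" "0 \<le> R" "R \<le> 1"
  shows "summable (\<lambda>n. (\<alpha> gchoose n) * (-R)^n * ((\<alpha> gchoose (n + l)) * R^(n + l)))"
proof (rule gbinomial_dominated_series(1)[OF assms(1) phi_coeff_term_bound[OF assms(2,3)]])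
  show "\<bar>\<alpha> gchoose (n + l)\<bar> \<le> (\<Sum>n. \<bar>\<alpha> gchoose n\<bar>)" for n
    using sum_le_suminf[OF summable_abs_gbinomial[OF assms(1)], of "{n + l}"] by simp
qed

lemma powr_bound_antimono:
  fixes b :: "nat \<Rightarrow> real"
  assumes "\<And>m. m \<ge> 1 \<Longrightarrow> \<bar>b m\<bar> \<le> K * real m powr q" "q \<le> 0" "1 \<le> l" "l \<le> m"
  shows "\<bar>b m\<bar> \<le> K * real l powr q"
proof -
  have "K \<ge> 0"
    using assms(1)[of 1] by simp
  have "\<bar>b m\<bar> \<le> K * real m powr q"
    using assms by simp
  also have "\<dots> \<le> K * real l powr q"
    using \<open>K \<ge> 0\<close> assms by (intro mult_left_mono powr_mono2') auto
  finally show ?thesis .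
qed

lemma phi_coeff_bound:
  fixes \<alpha> R :: real
  assumes "\<alpha> > 0" "0 \<le> R" "R \<le> 1" "l \<ge> 1"
    and K: "\<And>m. m \<ge> 1 \<Longrightarrow> \<bar>\<alpha> gchoose m\<bar> \<le> K * real m powr (-1 - \<alpha>)"
  shows "\<bar>phi_coeff \<alpha> R l\<bar> \<le> (\<Sum>n. \<bar>\<alpha> gchoose n\<bar>) * (K * real l powr (-1 - \<alpha>))"
  unfolding phi_coeff_def
proof (rule gbinomial_dominated_series(2)[OF assms(1) phi_coeff_term_bound[OF assms(2,3)]])
  show "\<bar>\<alpha> gchoose (n + l)\<bar> \<le> K * real l powr (-1 - \<alpha>)" for n
    using powr_bound_antimono[of "\<lambda>m. \<alpha> gchoose m", OF K] assms by auto
qed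

text \<open>By \<open>gbinomial_Suc_Suc\<close> consecutive coefficients nearly cancel, up to an error that
  vanishes as \<open>R \<rightarrow> 1\<close>.\<close>
lemma phi_coeff_pair_bound:
  fixes \<alpha> R :: real
  assumes "\<alpha> > 0" "0 \<le> R" "R \<le> 1"
    and K: "\<And>m. m \<ge> 1 \<Longrightarrow> \<bar>\<alpha> gchoose m\<bar> \<le> K * real m powr (-1 - \<alpha>)"
    and K': "\<And>m. m \<ge> 1 \<Longrightarrow> \<bar>(\<alpha> + 1) gchoose m\<bar> \<le> K' * real m powr (-2 - \<alpha>)"
  shows "\<bar>phi_coeff \<alpha> R l + phi_coeff \<alpha> R (Suc l)\<bar>
    \<le> (\<Sum>n. \<bar>\<alpha> gchoose n\<bar>) * (K' * real (Suc l) powr (-2 - \<alpha>) + (1 - R) * K * real (Suc l) powr (-1 - \<alpha>))"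
proof -
  define t where "t = (\<lambda>l n. (\<alpha> gchoose n) * (-R)^n * ((\<alpha> gchoose (n + l)) * R^(n + l)))"
  have "phi_coeff \<alpha> R l + phi_coeff \<alpha> R (Suc l) = (\<Sum>n. t l n + t (Suc l) n)"
    unfolding phi_coeff_def t_def by (intro suminf_add summable_phi_coeff assms)
  also have "\<bar>\<dots>\<bar> \<le> (\<Sum>n. \<bar>\<alpha> gchoose n\<bar>) * (K' * real (Suc l) powr (-2 - \<alpha>) + (1 - R) * K * real (Suc l) powr (-1 - \<alpha>))"
  proof (rule gbinomial_dominated_series(2)[OF assms(1)])
    fix n
    define m where "m = Suc (n + l)"
    have "t l n + t (Suc l) n = (\<alpha> gchoose n) * ((-R)^n * R^(n + l)) * (((\<alpha> + 1) gchoose m) - (1 - R) * (\<alpha> gchoose m))"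
      unfolding t_def m_def gbinomial_Suc_Suc by (simp add: algebra_simps)
    also have "\<bar>\<dots>\<bar> = \<bar>\<alpha> gchoose n\<bar> * \<bar>(-R)^n * R^(n + l)\<bar> * \<bar>((\<alpha> + 1) gchoose m) - (1 - R) * (\<alpha> gchoose m)\<bar>"
      by (simp add: abs_mult)
    also have "\<dots> \<le> \<bar>\<alpha> gchoose n\<bar> * 1 * (K' * real (Suc l) powr (-2 - \<alpha>) + (1 - R) * K * real (Suc l) powr (-1 - \<alpha>))"
    proof (intro mult_mono abs_power_mult_power_le_one assms order.refl)
      have "\<bar>(\<alpha> + 1) gchoose m\<bar> \<le> K' * real (Suc l) powr (-2 - \<alpha>)"
        using powr_bound_antimono[where l="Suc l" and m=m, OF K'] assms(1) by (simp add: m_def)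
      moreover have "\<bar>\<alpha> gchoose m\<bar> \<le> K * real (Suc l) powr (-1 - \<alpha>)"
        using powr_bound_antimono[where l="Suc l" and m=m, OF K] assms(1) by (simp add: m_def)
      ultimately show "\<bar>((\<alpha> + 1) gchoose m) - (1 - R) * (\<alpha> gchoose m)\<bar>
          \<le> K' * real (Suc l) powr (-2 - \<alpha>) + (1 - R) * K * real (Suc l) powr (-1 - \<alpha>)"
        using assms(3) by (auto simp: abs_mult mult.assoc intro!: abs_triangle_ineq4[THEN order_trans] add_mono mult_left_mono)
    qed auto
    finally show "\<bar>t l n + t (Suc l) n\<bar> \<le> \<bar>\<alpha> gchoose n\<bar> * (K' * real (Suc l) powr (-2 - \<alpha>) + (1 - R) * K * real (Suc l) powr (-1 - \<alpha>))"
      by simp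
  qed
  finally show ?thesis .
qed

section \<open>Fourier coefficients of \<open>\<phi>\<^sub>\<alpha>\<close>\<close>

lemma integral_exp_int:
  fixes j :: int
  shows "integral {-pi..pi} (\<lambda>\<theta>. exp (\<i> * of_int j * of_real \<theta>)) = (if j = 0 then 2 * pi else 0)"
proof (cases "j = 0")
  case False
  define F where "F x = exp (\<i> * of_int j * x) / (\<i> * of_int j)" for x :: complex
  have "((\<lambda>\<theta>. exp (\<i> * of_int j * of_real \<theta>)) has_integral (F (of_real pi) - F (of_real (-pi)))) {-pi..pi}"
    unfolding F_def using False
    by (intro fundamental_theorem_of_calculus has_vector_derivative_real_field)
       (auto intro!: derivative_eq_intros)
  moreover have "\<i> * of_int j * of_real pi = \<i> * of_int j * of_real (-pi) + \<i> * (of_int j * (of_real pi * 2))"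
    by (simp add: algebra_simps)
  then have "F (of_real pi) = F (of_real (-pi))"
    unfolding F_def by (metis exp_plus_2pin)
  ultimately show ?thesis
    using False by (simp add: integral_unique)
qed (simp add: scaleR_conv_of_real)

lemma sums_integral_Weierstrass:
  fixes v :: "nat \<Rightarrow> real \<Rightarrow> 'a::banach"
  assumes "\<And>m. continuous_on {a..b} (v m)"
    and "\<And>m x. x \<in> {a..b} \<Longrightarrow> norm (v m x) \<le> M m" "summable M"
  shows "(\<lambda>m. integral {a..b} (v m)) sums integral {a..b} (\<lambda>x. \<Sum>m. v m x)"
proof -
  have "uniform_limit {a..b} (\<lambda>n x. \<Sum>i<n. v i x) (\<lambda>x. \<Sum>m. v m x) sequentially"
    using assms(2,3) by (rule Weierstrass_m_test)
  moreover have "continuous_on {a..b} (\<lambda>x. \<Sum>i<n. v i x)" for n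
    by (intro continuous_intros assms(1))
  ultimately obtain I J where I: "\<And>n. ((\<lambda>x. \<Sum>i<n. v i x) has_integral I n) {a..b}"
    and J: "((\<lambda>x. \<Sum>m. v m x) has_integral J) {a..b}" and "I \<longlonglongrightarrow> J"
    by (rule uniform_limit_integral) auto
  moreover have "I n = (\<Sum>i<n. integral {a..b} (v i))" for n
  proof (rule has_integral_unique[OF I])
    show "((\<lambda>x. \<Sum>i<n. v i x) has_integral (\<Sum>i<n. integral {a..b} (v i))) {a..b}"
      by (intro has_integral_sum integrable_integral integrable_continuous_real assms(1)) auto
  qed
  then have "I = (\<lambda>n. \<Sum>i<n. integral {a..b} (v i))" ..
  ultimately show ?thesis
    unfolding sums_def by (simp add: integral_unique)
qed

lemma integral_exp_mult_sums:
  fixes b :: "nat \<Rightarrow> complex"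
  assumes "summable (\<lambda>m. norm (b m))"
    and "\<And>\<theta>. (\<lambda>m. b m * exp (- \<i> * of_nat m * of_real \<theta>)) sums h \<theta>"
  shows "integral {-pi..pi} (\<lambda>\<theta>. exp (\<i> * of_nat k * of_real \<theta>) * h \<theta>) = 2 * pi * b k"
proof -
  define v where "v m \<theta> = b m * exp (\<i> * of_int (int k - int m) * of_real \<theta>)" for m \<theta>
  have "(\<lambda>m. integral {-pi..pi} (v m)) sums integral {-pi..pi} (\<lambda>\<theta>. \<Sum>m. v m \<theta>)"
  proof (rule sums_integral_Weierstrass[OF _ _ assms(1)])
    show "continuous_on {-pi..pi} (v m)" for m
      unfolding v_def by (intro continuous_intros)
    show "norm (v m \<theta>) \<le> norm (b m)" for m \<theta>
      by (simp add: v_def norm_mult)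
  qed
  moreover have "integral {-pi..pi} (v m) = (if m = k then 2 * pi * b k else 0)" for m
    unfolding v_def using integral_exp_int[of "int k - int m"]
    by simp
  moreover have "(\<Sum>m. v m \<theta>) = exp (\<i> * of_nat k * of_real \<theta>) * h \<theta>" for \<theta>
  proof -
    have "v m \<theta> = exp (\<i> * of_nat k * of_real \<theta>) * (b m * exp (- \<i> * of_nat m * of_real \<theta>))" for m
      by (simp add: v_def exp_add[symmetric] algebra_simps)
    then show ?thesis
      using sums_mult[OF assms(2), of "exp (\<i> * of_nat k * of_real \<theta>)"] by (simp add: sums_iff)
  qed
  ultimately have "(\<lambda>m. if m = k then 2 * pi * b k else 0) sums integral {-pi..pi} (\<lambda>\<theta>. exp (\<i> * of_nat k * of_real \<theta>) * h \<theta>)"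
    by simp
  then show ?thesis
    using sums_single[of k "\<lambda>_. 2 * pi * b k"] sums_unique2 by auto
qed

lemma continuous_on_one_plus_powr:
  fixes g :: "'a::topological_space \<Rightarrow> complex"
  assumes "continuous_on A g" "\<And>x. x \<in> A \<Longrightarrow> norm (g x) \<le> 1" "\<alpha> > 0"
  shows "continuous_on A (\<lambda>x. (1 + g x) powr of_real \<alpha>)"
proof (intro continuous_intros assms(1))
  have "Re (1 + g x) \<ge> 0" if "x \<in> A" for x
    using abs_Re_le_cmod[of "g x"] assms(2)[OF that] by simp
  then show "A \<subseteq> {x. 0 \<le> Re (1 + g x) \<or> Im (1 + g x) \<noteq> 0}"
    by auto
qed (use assms(3) in auto)

lemma norm_one_plus_powr_le:
  fixes z :: complex
  assumes "norm z \<le> 1" "\<alpha> \<ge> 0"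
  shows "norm ((1 + z) powr of_real \<alpha>) \<le> 2 powr \<alpha>"
proof -
  have "norm (1 + z) \<le> 2"
    using norm_triangle_ineq[of 1 z] assms(1) by simp
  then show ?thesis
    using assms(2) by (simp add: norm_powr_real_powr' powr_mono2)
qed

lemma one_plus_nonpos_Reals:
  fixes z :: complex
  assumes "norm z \<le> 1" "1 + z \<in> \<real>\<^sub>\<le>\<^sub>0"
  shows "1 + z = 0"
proof -
  have "Re z \<le> -1" "Im z = 0"
    using assms(2) by (auto simp: complex_nonpos_Reals_iff)
  then show ?thesis
    using abs_Re_le_cmod[of z] assms(1) by (simp add: complex_eq_iff)
qed

lemma exp_mult_of_nat_power: "exp (c * of_nat n * x) = exp (c * x) ^ n" for c x :: complex
  by (simp add: exp_of_nat_mult[symmetric] mult_ac)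

lemma binomial_exp_sums:
  fixes r \<theta> :: real and c :: complex
  assumes "\<bar>r\<bar> < 1" "Re c = 0"
  shows "(\<lambda>n. of_real ((\<alpha> gchoose n) * r^n) * exp (c * of_nat n * of_real \<theta>)) sums
           (1 + of_real r * exp (c * of_real \<theta>)) powr of_real \<alpha>"
proof -
  have "norm (of_real r * exp (c * of_real \<theta>)) < 1"
    using assms by (simp add: norm_mult)
  from gen_binomial_complex[OF this, of "of_real \<alpha>"] show ?thesis
    unfolding exp_mult_of_nat_power
    by (simp only: gbinomial_altdef_of_nat of_real_prod of_real_divide of_real_diff of_real_of_nat_eq
          power_mult_distrib of_real_mult of_real_power mult.assoc)
qed

lemma phi_R_eq:
  "phi_R \<alpha> R \<theta> = (1 + of_real (-R) * exp (\<i> * of_real \<theta>)) powr of_real \<alpha> *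
     (1 + of_real R * exp (- \<i> * of_real \<theta>)) powr of_real \<alpha>"
  by (simp add: phi_R_def)

lemma continuous_on_phi_R:
  assumes "0 \<le> R" "R \<le> 1" "\<alpha> > 0"
  shows "continuous_on A (phi_R \<alpha> R)"
  unfolding phi_R_eq using assms
  by (intro continuous_intros continuous_on_one_plus_powr) (auto simp: norm_mult)

lemma norm_phi_R_le:
  assumes "0 \<le> R" "R \<le> 1" "\<alpha> \<ge> 0"
  shows "norm (phi_R \<alpha> R \<theta>) \<le> 2 powr \<alpha> * 2 powr \<alpha>"
  unfolding phi_R_eq norm_mult using assms
  by (intro mult_mono norm_one_plus_powr_le) (auto simp: norm_mult)

lemma integral_exp_mult_binomial:
  assumes "0 \<le> R" "R < 1" "\<alpha> > 0"
  shows "integral {-pi..pi} (\<lambda>\<theta>. exp (\<i> * of_nat k * of_real \<theta>) * (1 + of_real R * exp (- \<i> * of_real \<theta>)) powr of_real \<alpha>)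
    = 2 * pi * complex_of_real ((\<alpha> gchoose k) * R^k)"
proof (rule integral_exp_mult_sums)
  have "norm (norm (complex_of_real ((\<alpha> gchoose m) * R^m))) \<le> \<bar>\<alpha> gchoose m\<bar>" for m
    unfolding norm_of_real using assms power_le_one[of R m] by (simp add: abs_mult mult_left_le)
  then show "summable (\<lambda>m. norm (complex_of_real ((\<alpha> gchoose m) * R^m)))"
    by (intro summable_comparison_test'[OF summable_abs_gbinomial[OF assms(3)]])
  show "(\<lambda>m. complex_of_real ((\<alpha> gchoose m) * R^m) * exp (- \<i> * of_nat m * of_real \<theta>)) sums
      (1 + of_real R * exp (- \<i> * of_real \<theta>)) powr of_real \<alpha>" for \<theta>
    using assms by (intro binomial_exp_sums) auto
qed

lemma phi_R_mult_exp_sums: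
  assumes "0 \<le> R" "R < 1"
  shows "(\<lambda>n. of_real ((\<alpha> gchoose n) * (-R)^n) *
      (exp (\<i> * of_nat (n + l) * of_real \<theta>) * (1 + of_real R * exp (- \<i> * of_real \<theta>)) powr of_real \<alpha>))
    sums (phi_R \<alpha> R \<theta> * exp (\<i> * of_nat l * of_real \<theta>))"
proof -
  define c where "c = (1 + of_real R * exp (- \<i> * of_real \<theta>)) powr of_real \<alpha> * exp (\<i> * of_nat l * of_real \<theta>)"
  have "(\<lambda>n. of_real ((\<alpha> gchoose n) * (-R)^n) * exp (\<i> * of_nat n * of_real \<theta>) * c)
      sums ((1 + of_real (-R) * exp (\<i> * of_real \<theta>)) powr of_real \<alpha> * c)"
    using assms by (intro sums_mult2 binomial_exp_sums) auto
  moreover have "exp (\<i> * of_nat (n + l) * of_real \<theta>) = exp (\<i> * of_nat n * of_real \<theta>) * exp (\<i> * of_nat l * of_real \<theta>)" for n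
    by (simp add: exp_add[symmetric] algebra_simps)
  ultimately show ?thesis
    by (simp add: c_def phi_R_eq mult_ac)
qed

lemma fourier_coeff_phi_R:
  assumes "0 \<le> R" "R < 1" "\<alpha> > 0"
  shows "fourier_coeff (phi_R \<alpha> R) (- int l) = of_real (phi_coeff \<alpha> R l)"
proof -
  define Q where "Q \<theta> = (1 + of_real R * exp (- \<i> * of_real \<theta>)) powr of_real \<alpha>" for \<theta>
  define a where "a n = (of_real ((\<alpha> gchoose n) * (-R)^n) :: complex)" for n
  define p where "p n \<theta> = a n * (exp (\<i> * of_nat (n + l) * of_real \<theta>) * Q \<theta>)" for n \<theta>
  have Q_bound: "norm (Q \<theta>) \<le> 2 powr \<alpha>" for \<theta>
    unfolding Q_def using assms by (intro norm_one_plus_powr_le) (auto simp: norm_mult)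
  have "(\<lambda>n. integral {-pi..pi} (p n)) sums integral {-pi..pi} (\<lambda>\<theta>. \<Sum>n. p n \<theta>)"
  proof (rule sums_integral_Weierstrass)
    show "continuous_on {-pi..pi} (p n)" for n
      unfolding p_def Q_def using assms
      by (intro continuous_intros continuous_on_one_plus_powr) (auto simp: norm_mult)
    have "norm (p n \<theta>) = \<bar>\<alpha> gchoose n\<bar> * R^n * norm (Q \<theta>)" for n \<theta>
      unfolding p_def a_def norm_mult norm_of_real using assms by (simp add: abs_mult power_abs)
    then show "norm (p n \<theta>) \<le> \<bar>\<alpha> gchoose n\<bar> * 2 powr \<alpha>" for n \<theta>
      using Q_bound[of \<theta>] assms mult_mono[OF power_le_one[of R n] Q_bound[of \<theta>]] by (simp add: mult.assoc mult_left_mono)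
    show "summable (\<lambda>n. \<bar>\<alpha> gchoose n\<bar> * 2 powr \<alpha>)"
      by (intro summable_mult2 summable_abs_gbinomial assms)
  qed
  moreover have "(\<Sum>n. p n \<theta>) = phi_R \<alpha> R \<theta> * exp (- \<i> * of_int (- int l) * of_real \<theta>)" for \<theta>
    using sums_unique[OF phi_R_mult_exp_sums[OF assms(1,2), of \<alpha> l \<theta>]] by (simp add: p_def a_def Q_def)
  moreover have "integral {-pi..pi} (p n) = 2 * pi * complex_of_real ((\<alpha> gchoose n) * (-R)^n * ((\<alpha> gchoose (n + l)) * R^(n + l)))" for n
  proof -
    have "integral {-pi..pi} (p n) = a n * integral {-pi..pi} (\<lambda>\<theta>. exp (\<i> * of_nat (n + l) * of_real \<theta>) * Q \<theta>)"
      unfolding p_def by (rule integral_mult_right)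
    also have "\<dots> = a n * (2 * pi * complex_of_real ((\<alpha> gchoose (n + l)) * R^(n + l)))"
      unfolding Q_def integral_exp_mult_binomial[OF assms] ..
    finally show ?thesis
      by (simp add: a_def mult_ac)
  qed
  moreover have "(\<lambda>n. 2 * pi * complex_of_real ((\<alpha> gchoose n) * (-R)^n * ((\<alpha> gchoose (n + l)) * R^(n + l))))
      sums (2 * pi * complex_of_real (phi_coeff \<alpha> R l))"
    unfolding phi_coeff_def using assms
    by (intro sums_mult sums_of_real summable_sums summable_phi_coeff) auto
  ultimately have "integral {-pi..pi} (\<lambda>\<theta>. phi_R \<alpha> R \<theta> * exp (- \<i> * of_int (- int l) * of_real \<theta>))
      = 2 * pi * complex_of_real (phi_coeff \<alpha> R l)"
    by (simp add: sums_unique2)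
  then show ?thesis
    by (simp add: fourier_coeff_def)
qed

lemma phi_R_tendsto:
  assumes "\<alpha> > 0" "(g \<longlongrightarrow> 1) F"
  shows "((\<lambda>x. phi_R \<alpha> (g x) \<theta>) \<longlongrightarrow> phi_R \<alpha> 1 \<theta>) F"
proof -
  have base: "1 + z \<notin> \<real>\<^sub>\<le>\<^sub>0 \<or> (1 + z = 0 \<and> 0 < Re (complex_of_real \<alpha>))" if "norm z \<le> 1" for z :: complex
    using one_plus_nonpos_Reals[OF that] assms(1) by auto
  show ?thesis
    unfolding phi_R_eq by (intro tendsto_intros tendsto_powr_complex' base assms(2)) (auto simp: norm_mult)
qed

lemma phi_eq_phi_R_1:
  assumes "\<alpha> > 0"
  shows "phi \<alpha> = phi_R \<alpha> 1"
proof
  fix \<theta>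
  have "((\<lambda>R. phi_R \<alpha> R \<theta>) \<longlongrightarrow> phi_R \<alpha> 1 \<theta>) (at_left 1)"
    using assms by (intro phi_R_tendsto tendsto_ident_at)
  then show "phi \<alpha> \<theta> = phi_R \<alpha> 1 \<theta>"
    unfolding phi_def by (intro tendsto_Lim) auto
qed

lemma fourier_coeff_phi_R_tendsto:
  assumes "\<alpha> > 0" "\<And>k. 0 \<le> R k" "\<And>k. R k \<le> 1" "R \<longlonglongrightarrow> 1"
  shows "(\<lambda>k. fourier_coeff (phi_R \<alpha> (R k)) s) \<longlonglongrightarrow> fourier_coeff (phi \<alpha>) s"
proof -
  define E where "E \<theta> = exp (- \<i> * of_int s * of_real \<theta>)" for \<theta> :: real
  have "(\<lambda>k. integral {-pi..pi} (\<lambda>\<theta>. phi_R \<alpha> (R k) \<theta> * E \<theta>))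
      \<longlonglongrightarrow> integral {-pi..pi} (\<lambda>\<theta>. phi_R \<alpha> 1 \<theta> * E \<theta>)"
  proof (rule dominated_convergence(2))
    show "(\<lambda>\<theta>. phi_R \<alpha> (R k) \<theta> * E \<theta>) integrable_on {-pi..pi}" for k
      unfolding E_def using assms
      by (intro integrable_continuous_real continuous_intros continuous_on_phi_R) auto
    show "(\<lambda>_. 2 powr \<alpha> * 2 powr \<alpha>) integrable_on {-pi..pi}"
      by (rule integrable_const_ivl)
    show "norm (phi_R \<alpha> (R k) \<theta> * E \<theta>) \<le> 2 powr \<alpha> * 2 powr \<alpha>" for k \<theta>
      unfolding E_def norm_mult using assms norm_phi_R_le[of "R k" \<alpha> \<theta>] by simp
    show "(\<lambda>k. phi_R \<alpha> (R k) \<theta> * E \<theta>) \<longlonglongrightarrow> phi_R \<alpha> 1 \<theta> * E \<theta>" for \<theta>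
      using assms by (intro tendsto_mult tendsto_const phi_R_tendsto)
  qed
  then show ?thesis
    unfolding fourier_coeff_def E_def phi_eq_phi_R_1[OF assms(1)] by (intro tendsto_mult tendsto_const)
qed

lemma norm_fourier_coeff_phi_le:
  assumes "\<alpha> > 0" "l \<ge> 1"
    and K: "\<And>m. m \<ge> 1 \<Longrightarrow> \<bar>\<alpha> gchoose m\<bar> \<le> K * real m powr (-1 - \<alpha>)"
  shows "norm (fourier_coeff (phi \<alpha>) (- int l)) \<le> (\<Sum>n. \<bar>\<alpha> gchoose n\<bar>) * (K * real l powr (-1 - \<alpha>))"
proof -
  let ?R = "\<lambda>k. real k / real (Suc k)"
  have R: "0 \<le> ?R k" "?R k \<le> 1" "?R k < 1" for k
    by auto
  have "norm (fourier_coeff (phi_R \<alpha> (?R k)) (- int l)) \<le> (\<Sum>n. \<bar>\<alpha> gchoose n\<bar>) * (K * real l powr (-1 - \<alpha>))" for k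
    unfolding fourier_coeff_phi_R[OF R(1,3)[of k] assms(1)] norm_of_real
    by (rule phi_coeff_bound[OF assms(1) R(1,2) assms(2) K])
  then show ?thesis
    by (intro Lim_norm_ubound[OF _ fourier_coeff_phi_R_tendsto[OF assms(1) R(1,2) LIMSEQ_n_over_Suc_n]] always_eventually)
       simp_all
qed

lemma norm_fourier_coeff_phi_pair_le:
  assumes "\<alpha> > 0"
    and K: "\<And>m. m \<ge> 1 \<Longrightarrow> \<bar>\<alpha> gchoose m\<bar> \<le> K * real m powr (-1 - \<alpha>)"
    and K': "\<And>m. m \<ge> 1 \<Longrightarrow> \<bar>(\<alpha> + 1) gchoose m\<bar> \<le> K' * real m powr (-2 - \<alpha>)"
  shows "norm (fourier_coeff (phi \<alpha>) (- int l) + fourier_coeff (phi \<alpha>) (- int (Suc l)))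
    \<le> (\<Sum>n. \<bar>\<alpha> gchoose n\<bar>) * (K' * real (Suc l) powr (-2 - \<alpha>))"
proof -
  let ?R = "\<lambda>k. real k / real (Suc k)"
  let ?c = "\<lambda>R l. fourier_coeff (phi_R \<alpha> R) (- int l)"
  define S where "S = (\<Sum>n. \<bar>\<alpha> gchoose n\<bar>)"
  have R: "0 \<le> ?R k" "?R k \<le> 1" "?R k < 1" for k
    by auto
  note lim = fourier_coeff_phi_R_tendsto[OF assms(1) R(1,2) LIMSEQ_n_over_Suc_n]
  have "(\<lambda>k. norm (?c (?R k) l + ?c (?R k) (Suc l)))
      \<longlonglongrightarrow> norm (fourier_coeff (phi \<alpha>) (- int l) + fourier_coeff (phi \<alpha>) (- int (Suc l)))"
    by (intro tendsto_norm tendsto_add lim)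
  moreover have "(\<lambda>k. S * (K' * real (Suc l) powr (-2 - \<alpha>) + (1 - ?R k) * K * real (Suc l) powr (-1 - \<alpha>)))
      \<longlonglongrightarrow> S * (K' * real (Suc l) powr (-2 - \<alpha>) + (1 - 1) * K * real (Suc l) powr (-1 - \<alpha>))"
    by (intro tendsto_intros LIMSEQ_n_over_Suc_n)
  moreover have "norm (?c (?R k) l + ?c (?R k) (Suc l))
      \<le> S * (K' * real (Suc l) powr (-2 - \<alpha>) + (1 - ?R k) * K * real (Suc l) powr (-1 - \<alpha>))" for k
    unfolding fourier_coeff_phi_R[OF R(1,3)[of k] assms(1)] S_def of_real_add[symmetric] norm_of_real
    by (rule phi_coeff_pair_bound[OF assms(1) R(1,2) K K'])
  ultimately show ?thesis
    unfolding S_def by (simp add: LIMSEQ_le)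
qed

lemma fourier_coeff_phi_bounds:
  assumes "\<alpha> > 0"
  obtains A B where "A \<ge> 0" "B \<ge> 0"
    "\<And>l. l \<ge> 1 \<Longrightarrow> norm (fourier_coeff (phi \<alpha>) (- int l)) \<le> A * real l powr (-1 - \<alpha>)"
    "\<And>l. norm (fourier_coeff (phi \<alpha>) (- int l) + fourier_coeff (phi \<alpha>) (- int (Suc l)))
       \<le> B * real (Suc l) powr (-2 - \<alpha>)"
proof -
  define S where "S = (\<Sum>n. \<bar>\<alpha> gchoose n\<bar>)"
  have "S \<ge> 0"
    unfolding S_def by (intro suminf_nonneg summable_abs_gbinomial assms) simp
  obtain K where K: "K \<ge> 0" "\<And>m. m \<ge> 1 \<Longrightarrow> \<bar>\<alpha> gchoose m\<bar> \<le> K * real m powr (-1 - \<alpha>)"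
    using abs_gbinomial_le_powr[of \<alpha>] by blast
  have "-1 - (\<alpha> + 1) = -2 - \<alpha>"
    by simp
  then obtain K' where K': "K' \<ge> 0" "\<And>m. m \<ge> 1 \<Longrightarrow> \<bar>(\<alpha> + 1) gchoose m\<bar> \<le> K' * real m powr (-2 - \<alpha>)"
    using abs_gbinomial_le_powr[of "\<alpha> + 1"] by metis
  show ?thesis
  proof (rule that[of "S * K" "S * K'"])
    show "norm (fourier_coeff (phi \<alpha>) (- int l)) \<le> S * K * real l powr (-1 - \<alpha>)" if "l \<ge> 1" for l
      using norm_fourier_coeff_phi_le[OF assms that K(2)] by (simp add: S_def mult.assoc)
    show "norm (fourier_coeff (phi \<alpha>) (- int l) + fourier_coeff (phi \<alpha>) (- int (Suc l)))
        \<le> S * K' * real (Suc l) powr (-2 - \<alpha>)" for l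
      using norm_fourier_coeff_phi_pair_le[OF assms K(2) K'(2)] by (simp add: S_def mult.assoc)
  qed (use \<open>S \<ge> 0\<close> K(1) K'(1) in auto)
qed

section \<open>The scaled first row of \<open>T\<^sub>N(\<phi>\<^sub>\<alpha>) X\<^sub>N\<close>\<close>

lemma sum_pairs_by_parts:
  fixes c x :: "nat \<Rightarrow> 'a::comm_ring_1"
  shows "2 * (\<Sum>l=0..q. c l * x l) =
    (\<Sum>l<q. (c l + c (Suc l)) * x l + c (Suc l) * (x (Suc l) - x l)) + c 0 * x 0 + c q * x q"
proof (induction q)
  case 0 then show ?case by (simp add: mult_2[symmetric])
next
  case (Suc q)
  define F where "F = (\<lambda>l. (c l + c (Suc l)) * x l + c (Suc l) * (x (Suc l) - x l))"
  have Fq: "F q + c (Suc q) * x (Suc q) = c q * x q + 2 * (c (Suc q) * x (Suc q))"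
    unfolding F_def by (simp add: algebra_simps)
  have "2 * (\<Sum>l=0..Suc q. c l * x l) = 2 * (\<Sum>l=0..q. c l * x l) + 2 * (c (Suc q) * x (Suc q))"
    by (simp add: distrib_left)
  also have "\<dots> = sum F {..<q} + c 0 * x 0 + (c q * x q + 2 * (c (Suc q) * x (Suc q)))"
    using Suc.IH unfolding F_def by (simp only: add.assoc)
  also have "\<dots> = sum F {..<q} + c 0 * x 0 + (F q + c (Suc q) * x (Suc q))" by (simp only: Fq)
  also have "\<dots> = (sum F {..<q} + F q) + c 0 * x 0 + c (Suc q) * x (Suc q)" by (simp only: add_ac)
  also have "sum F {..<q} + F q = sum F {..<Suc q}" by simp
  finally show ?case unfolding F_def .
qed

lemma sum_powr_le:
  fixes \<gamma> :: real
  assumes "0 \<le> \<gamma>" "\<gamma> < 1"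
  shows "(\<Sum>j=1..M. real j powr (-\<gamma>)) \<le> real M powr (1 - \<gamma>) / (1 - \<gamma>)"
proof (induction M)
  case (Suc M)
  show ?case
  proof (cases "M = 0")
    case False
    have "((\<lambda>x. x powr (1 - \<gamma>)) has_real_derivative (1 - \<gamma>) * x powr (- \<gamma>)) (at x)"
      if "real M \<le> x" "x \<le> real M + 1" for x
      using that False has_real_derivative_powr[of x "1 - \<gamma>"] by simp
    from MVT2[of "real M" "real M + 1", OF _ this] obtain z where z: "real M < z" "z < real M + 1"
      "(real M + 1) powr (1 - \<gamma>) - real M powr (1 - \<gamma>) = (1 - \<gamma>) * z powr (- \<gamma>)"
      by auto
    have "(real M + 1) powr (-\<gamma>) \<le> z powr (-\<gamma>)"
      using z False assms by (intro powr_mono2') auto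
    also have "\<dots> = ((real M + 1) powr (1 - \<gamma>) - real M powr (1 - \<gamma>)) / (1 - \<gamma>)"
      using z(3) assms by simp
    finally have "real M powr (1 - \<gamma>) / (1 - \<gamma>) + (real M + 1) powr (-\<gamma>) \<le> (real M + 1) powr (1 - \<gamma>) / (1 - \<gamma>)"
      by (simp add: diff_divide_distrib)
    with Suc.IH show ?thesis
      by (simp add: add.commute)
  qed (use assms in simp)
qed simp

lemma summable_Suc_powr: "\<alpha> > 0 \<Longrightarrow> summable (\<lambda>l. real (Suc l) powr (-1 - \<alpha>))"
  using summable_Suc_iff[of "\<lambda>n. real n powr (-1 - \<alpha>)"] summable_real_powr_iff[of "-1 - \<alpha>"] by simp

lemma norm_paired_term_le:
  fixes a b :: complex and x y :: real
  assumes "A \<ge> 0" "B \<ge> 0" "L \<ge> 0" "N > 0"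
    and "norm b \<le> A * real (Suc l) powr (-1 - \<alpha>)"
    and "norm (a + b) \<le> B * real (Suc l) powr (-2 - \<alpha>)"
    and "\<bar>x\<bar> \<le> L * real l / real N" "\<bar>y - x\<bar> \<le> L / real N"
  shows "norm ((a + b) * of_real x + b * of_real (y - x)) \<le> (A + B) * L * real (Suc l) powr (-1 - \<alpha>) / real N"
proof -
  have "real l * real (Suc l) powr (-2 - \<alpha>) \<le> real (Suc l) * real (Suc l) powr (-2 - \<alpha>)"
    by (intro mult_right_mono) auto
  also have "\<dots> = real (Suc l) powr (-1 - \<alpha>)"
    by (subst powr_mult_base) auto
  finally have l: "real l * real (Suc l) powr (-2 - \<alpha>) \<le> real (Suc l) powr (-1 - \<alpha>)" .
  have "norm ((a + b) * of_real x + b * of_real (y - x)) \<le> norm (a + b) * \<bar>x\<bar> + norm b * \<bar>y - x\<bar>"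
    by (rule order_trans[OF norm_triangle_ineq]) (simp add: norm_mult del: of_real_diff)
  also have "\<dots> \<le> (B * real (Suc l) powr (-2 - \<alpha>)) * (L * real l / real N) + (A * real (Suc l) powr (-1 - \<alpha>)) * (L / real N)"
    using assms by (intro add_mono mult_mono) auto
  also have "\<dots> = (B * L * (real l * real (Suc l) powr (-2 - \<alpha>)) + A * L * real (Suc l) powr (-1 - \<alpha>)) / real N"
    by (simp add: add_divide_distrib algebra_simps)
  also have "\<dots> \<le> (B * L * real (Suc l) powr (-1 - \<alpha>) + A * L * real (Suc l) powr (-1 - \<alpha>)) / real N"
    using l assms by (intro divide_right_mono add_mono mult_left_mono) auto
  also have "\<dots> = (A + B) * L * real (Suc l) powr (-1 - \<alpha>) / real N"
    by (simp add: field_simps)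
  finally show ?thesis .
qed

lemma norm_mult_sample_le:
  fixes c :: complex and x :: real
  assumes "A \<ge> 0" "L \<ge> 0" "N > 0" "\<alpha> > 0" "q \<ge> 1"
    and "norm c \<le> A * real q powr (-1 - \<alpha>)" "\<bar>x\<bar> \<le> L * real q / real N"
  shows "norm (c * of_real x) \<le> A * L / real N"
proof -
  have "norm (c * of_real x) \<le> (A * real q powr (-1 - \<alpha>)) * (L * real q / real N)"
    unfolding norm_mult norm_of_real using assms by (intro mult_mono) auto
  also have "\<dots> = A * L * (real q * real q powr (-1 - \<alpha>)) / real N"
    by (simp add: field_simps)
  also have "real q * real q powr (-1 - \<alpha>) = real q powr (- \<alpha>)"
    using assms by (subst powr_mult_base) auto
  also have "A * L * real q powr (- \<alpha>) / real N \<le> A * L * 1 / real N"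
    using assms powr_mono2'[of "-\<alpha>" 1 "real q"] by (intro divide_right_mono mult_left_mono) auto
  finally show ?thesis
    by simp
qed

text \<open>Pairing consecutive terms exploits the cancellation in \<open>c l + c (Suc l)\<close>; without it the
  bound would only be \<open>O(N\<^sup>-\<^sup>\<alpha>)\<close>.\<close>
lemma norm_sum_smooth_part_le:
  fixes c :: "nat \<Rightarrow> complex" and X :: "nat \<Rightarrow> real"
  assumes "N > 0" "A \<ge> 0" "B \<ge> 0" "L \<ge> 0" "0 < \<alpha>"
    and C1: "\<And>l. l \<ge> 1 \<Longrightarrow> norm (c l) \<le> A * real l powr (-1 - \<alpha>)"
    and C2: "\<And>l. norm (c l + c (Suc l)) \<le> B * real (Suc l) powr (-2 - \<alpha>)"
    and "X 0 = 0"
    and X: "\<And>l. l \<le> q \<Longrightarrow> \<bar>X l\<bar> \<le> L * real l / real N"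
    and dX: "\<And>l. l < q \<Longrightarrow> \<bar>X (Suc l) - X l\<bar> \<le> L / real N"
  shows "norm (\<Sum>l=0..q. c l * of_real (X l)) \<le> ((A + B) * L * (\<Sum>l. real (Suc l) powr (-1 - \<alpha>)) + A * L) / real N"
proof -
  define Z where "Z = (\<Sum>l. real (Suc l) powr (-1 - \<alpha>))"
  define x where "x l = complex_of_real (X l)" for l
  define F where "F l = (c l + c (Suc l)) * x l + c (Suc l) * (x (Suc l) - x l)" for l
  have "Z \<ge> 0"
    unfolding Z_def using assms by (intro suminf_nonneg summable_Suc_powr) auto
  have "norm (sum F {..<q}) \<le> (\<Sum>l<q. (A + B) * L * real (Suc l) powr (-1 - \<alpha>) / real N)"
  proof (rule order_trans[OF norm_sum sum_mono])
    fix l assume "l \<in> {..<q}"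
    then show "norm (F l) \<le> (A + B) * L * real (Suc l) powr (-1 - \<alpha>) / real N"
      unfolding F_def x_def of_real_diff[symmetric] using assms
      by (intro norm_paired_term_le C1 C2 X dX) auto
  qed
  also have "\<dots> = (A + B) * L / real N * (\<Sum>l<q. real (Suc l) powr (-1 - \<alpha>))"
    by (simp add: sum_distrib_left field_simps)
  also have "\<dots> \<le> (A + B) * L / real N * Z"
    unfolding Z_def using assms by (intro mult_left_mono sum_le_suminf summable_Suc_powr) auto
  finally have F: "norm (sum F {..<q}) \<le> (A + B) * L * Z / real N"
    by simp
  have last: "norm (c q * x q) \<le> A * L / real N"
  proof (cases "q = 0")
    case False
    show ?thesis
      unfolding x_def using False assms by (intro norm_mult_sample_le[where q=q] C1 X) auto
  qed (use \<open>X 0 = 0\<close> assms in \<open>simp add: x_def\<close>)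
  have "2 * (\<Sum>l=0..q. c l * x l) = sum F {..<q} + c 0 * x 0 + c q * x q"
    unfolding F_def by (rule sum_pairs_by_parts)
  then have "2 * norm (\<Sum>l=0..q. c l * x l) = norm (sum F {..<q} + c 0 * x 0 + c q * x q)"
    by (metis norm_mult norm_numeral)
  also have "\<dots> \<le> norm (sum F {..<q}) + norm (c q * x q)"
    using \<open>X 0 = 0\<close> norm_triangle_ineq by (simp add: x_def)
  also have "\<dots> \<le> ((A + B) * L * Z + A * L) / real N"
    using F last by (simp add: add_divide_distrib)
  finally have "2 * norm (\<Sum>l=0..q. c l * x l) \<le> ((A + B) * L * Z + A * L) / real N" .
  moreover have "0 \<le> ((A + B) * L * Z + A * L) / real N"
    using \<open>Z \<ge> 0\<close> assms by simp
  ultimately show ?thesis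
    unfolding x_def Z_def by linarith
qed

lemma norm_tail_term_le:
  fixes c :: complex and x :: real
  assumes "A \<ge> 0" "K \<ge> 0" "\<alpha> > 0" "1 \<le> l" "real N / 2 \<le> real l" "l < N"
    and "norm c \<le> A * real l powr (-1 - \<alpha>)"
    and "\<bar>x\<bar> \<le> K * (real (N - l) / real N) powr (-\<gamma>)"
  shows "norm (c * of_real x) \<le> A * K * 2 powr (1 + \<alpha>) * real N powr (\<gamma> - 1 - \<alpha>) * real (N - l) powr (-\<gamma>)"
proof -
  have N: "real N > 0"
    using assms by simp
  have "real l powr (-1 - \<alpha>) \<le> (real N / 2) powr (-1 - \<alpha>)"
    using assms N by (intro powr_mono2') auto
  also have "\<dots> = 2 powr (1 + \<alpha>) * real N powr (-1 - \<alpha>)"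
    using N by (simp add: powr_divide powr_minus divide_simps) (simp add: powr_add[symmetric])
  finally have l: "real l powr (-1 - \<alpha>) \<le> 2 powr (1 + \<alpha>) * real N powr (-1 - \<alpha>)" .
  have "norm (c * of_real x) \<le> (A * real l powr (-1 - \<alpha>)) * (K * (real (N - l) / real N) powr (-\<gamma>))"
    unfolding norm_mult norm_of_real using assms by (intro mult_mono) auto
  also have "\<dots> \<le> (A * (2 powr (1 + \<alpha>) * real N powr (-1 - \<alpha>))) * (K * (real (N - l) / real N) powr (-\<gamma>))"
    using l assms by (intro mult_right_mono mult_left_mono) auto
  also have "\<dots> = A * K * 2 powr (1 + \<alpha>) * real N powr (\<gamma> - 1 - \<alpha>) * real (N - l) powr (-\<gamma>)"
    using N by (simp add: powr_divide powr_minus powr_diff divide_simps)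
  finally show ?thesis .
qed

lemma scaled_norm_sum_singular_part_le:
  fixes c :: "nat \<Rightarrow> complex" and X :: "nat \<Rightarrow> real"
  assumes "A \<ge> 0" "K \<ge> 0" "0 \<le> \<gamma>" "\<gamma> < 1" "0 < \<alpha>" "0 < \<delta>" "\<delta> \<le> 1/2"
    and C1: "\<And>l. l \<ge> 1 \<Longrightarrow> norm (c l) \<le> A * real l powr (-1 - \<alpha>)"
    and q: "q < N" "real N * (1 - \<delta>) < real (Suc q)"
    and "X N = 0"
    and X: "\<And>l. q < l \<Longrightarrow> l < N \<Longrightarrow> \<bar>X l\<bar> \<le> K * (real (N - l) / real N) powr (-\<gamma>)"
  shows "real N powr \<alpha> * norm (\<Sum>l = Suc q..N. c l * of_real (X l)) \<le> A * K * 2 powr (1 + \<alpha>) * \<delta> powr (1 - \<gamma>) / (1 - \<gamma>)"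
proof -
  define C where "C = A * K * 2 powr (1 + \<alpha>) * real N powr (\<gamma> - 1 - \<alpha>)"
  have N: "real N > 0"
    using q by simp
  have "(\<Sum>l \<in> {Suc q..<N}. real (N - l) powr (-\<gamma>)) = (\<Sum>j = 1..N - Suc q. real j powr (-\<gamma>))"
    using q by (intro sum.reindex_bij_witness[of _ "\<lambda>j. N - j" "\<lambda>l. N - l"]) auto
  also have "\<dots> \<le> real (N - Suc q) powr (1 - \<gamma>) / (1 - \<gamma>)"
    using assms by (intro sum_powr_le)
  also have "\<dots> \<le> (\<delta> * real N) powr (1 - \<gamma>) / (1 - \<gamma>)"
    using q assms by (intro divide_right_mono powr_mono2) (auto simp: algebra_simps)
  finally have sum_le: "(\<Sum>l \<in> {Suc q..<N}. real (N - l) powr (-\<gamma>)) \<le> (\<delta> * real N) powr (1 - \<gamma>) / (1 - \<gamma>)" .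
  have "{Suc q..N} = insert N {Suc q..<N}"
    using q by auto
  then have "norm (\<Sum>l = Suc q..N. c l * of_real (X l)) \<le> (\<Sum>l \<in> {Suc q..<N}. norm (c l * of_real (X l)))"
    using \<open>X N = 0\<close> by (simp add: norm_sum)
  also have "\<dots> \<le> (\<Sum>l \<in> {Suc q..<N}. C * real (N - l) powr (-\<gamma>))"
  proof (rule sum_mono)
    fix l assume l: "l \<in> {Suc q..<N}"
    have "\<delta> * real N \<le> 1/2 * real N"
      using assms N by (intro mult_right_mono) auto
    moreover have "real (Suc q) \<le> real l"
      using l by simp
    ultimately have "real N / 2 \<le> real l"
      using q(2) by (simp add: algebra_simps)
    then show "norm (c l * of_real (X l)) \<le> C * real (N - l) powr (-\<gamma>)"
      unfolding C_def using l assms by (intro norm_tail_term_le C1 X) auto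
  qed
  also have "\<dots> \<le> C * ((\<delta> * real N) powr (1 - \<gamma>) / (1 - \<gamma>))"
    unfolding sum_distrib_left[symmetric] C_def using sum_le assms by (intro mult_left_mono) auto
  finally have "norm (\<Sum>l = Suc q..N. c l * of_real (X l)) \<le> C * ((\<delta> * real N) powr (1 - \<gamma>) / (1 - \<gamma>))" .
  then have "real N powr \<alpha> * norm (\<Sum>l = Suc q..N. c l * of_real (X l)) \<le> real N powr \<alpha> * (C * ((\<delta> * real N) powr (1 - \<gamma>) / (1 - \<gamma>)))"
    by (rule mult_left_mono) simp
  also have "\<dots> = A * K * 2 powr (1 + \<alpha>) * \<delta> powr (1 - \<gamma>) / (1 - \<gamma>)"
    using N assms by (simp add: C_def powr_mult powr_add[symmetric] field_simps)
  finally show ?thesis .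
qed

lemma XN_lipschitz_bounds:
  fixes f :: "real \<Rightarrow> real"
  assumes lip: "L-lipschitz_on {0..1 - \<delta>} f" and "f 0 = 0"
    and q: "real q \<le> real N * (1 - \<delta>)" "q < N"
  shows "XN f N 0 = 0"
    and "l \<le> q \<Longrightarrow> \<bar>XN f N l\<bar> \<le> L * real l / real N"
    and "l < q \<Longrightarrow> \<bar>XN f N (Suc l) - XN f N l\<bar> \<le> L / real N"
proof -
  have N: "real N > 0"
    using q by simp
  have "0 \<le> real N * (1 - \<delta>)"
    using q(1) by linarith
  then have "\<delta> \<le> 1"
    using N by (simp add: zero_le_mult_iff)
  have X: "XN f N l = f (real l / real N)" if "l \<le> q" for l
    using that q by (simp add: XN_def)
  have arg: "real l / real N \<in> {0..1 - \<delta>}" if "l \<le> q" for l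
    using that q N by (simp add: field_simps)
  show "XN f N 0 = 0"
    using X[of 0] \<open>f 0 = 0\<close> by simp
  show "\<bar>XN f N l\<bar> \<le> L * real l / real N" if "l \<le> q"
    using lipschitz_onD[OF lip arg[OF that], of 0] that \<open>f 0 = 0\<close> \<open>\<delta> \<le> 1\<close>
    by (simp add: X dist_real_def)
  show "\<bar>XN f N (Suc l) - XN f N l\<bar> \<le> L / real N" if "l < q"
    using lipschitz_onD[OF lip arg[of "Suc l"] arg[of l]] that N
    by (simp add: X dist_real_def diff_divide_distrib[symmetric])
qed

lemma abs_XN_le_singular:
  fixes f :: "real \<Rightarrow> real"
  assumes sing: "\<And>y. 0 < y \<Longrightarrow> y < \<delta> \<Longrightarrow> \<bar>f (1 - y)\<bar> \<le> K * y powr (-\<gamma>)"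
    and "real N * (1 - \<delta>) < real l" "l < N"
  shows "\<bar>XN f N l\<bar> \<le> K * (real (N - l) / real N) powr (-\<gamma>)"
proof -
  have "real (N - l) / real N < \<delta>"
    using assms by (simp add: pos_divide_less_eq algebra_simps)
  moreover have "real l / real N = 1 - real (N - l) / real N"
    using assms by (simp add: field_simps)
  ultimately show ?thesis
    using sing[of "real (N - l) / real N"] assms by (simp add: XN_def)
qed

lemma scaled_row_sum_bound:
  fixes c :: "nat \<Rightarrow> complex" and f :: "real \<Rightarrow> real"
  assumes "A \<ge> 0" "B \<ge> 0" "K \<ge> 0" "0 < \<alpha>" "0 \<le> \<gamma>" "\<gamma> < 1" "0 < \<delta>" "\<delta> \<le> 1/2" "N \<ge> 1"
    and C1: "\<And>l. l \<ge> 1 \<Longrightarrow> norm (c l) \<le> A * real l powr (-1 - \<alpha>)"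
    and C2: "\<And>l. norm (c l + c (Suc l)) \<le> B * real (Suc l) powr (-2 - \<alpha>)"
    and lip: "L-lipschitz_on {0..1 - \<delta>} f" and "f 0 = 0"
    and sing: "\<And>y. 0 < y \<Longrightarrow> y < \<delta> \<Longrightarrow> \<bar>f (1 - y)\<bar> \<le> K * y powr (-\<gamma>)"
  shows "real N powr \<alpha> * norm (\<Sum>l=0..N. c l * of_real (XN f N l))
    \<le> ((A + B) * L * (\<Sum>l. real (Suc l) powr (-1 - \<alpha>)) + A * L) * real N powr (\<alpha> - 1)
      + A * K * 2 powr (1 + \<alpha>) * \<delta> powr (1 - \<gamma>) / (1 - \<gamma>)"
proof -
  define q where "q = nat \<lfloor>real N * (1 - \<delta>)\<rfloor>"
  have N: "real N > 0"
    using assms by simp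
  have "0 \<le> real N * (1 - \<delta>)"
    using assms by simp
  then have q: "real q \<le> real N * (1 - \<delta>)" "real N * (1 - \<delta>) < real (Suc q)"
    unfolding q_def by linarith+
  moreover have "real N * (1 - \<delta>) < real N"
    using N assms by simp
  ultimately have "q < N"
    by linarith
  note X = XN_lipschitz_bounds[OF lip \<open>f 0 = 0\<close> q(1) \<open>q < N\<close>]
  have head: "norm (\<Sum>l=0..q. c l * of_real (XN f N l))
      \<le> ((A + B) * L * (\<Sum>l. real (Suc l) powr (-1 - \<alpha>)) + A * L) / real N"
    using N by (intro norm_sum_smooth_part_le[OF _ assms(1,2) lipschitz_on_nonneg[OF lip] assms(4) C1 C2] X) auto
  have tail: "real N powr \<alpha> * norm (\<Sum>l = Suc q..N. c l * of_real (XN f N l))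
      \<le> A * K * 2 powr (1 + \<alpha>) * \<delta> powr (1 - \<gamma>) / (1 - \<gamma>)"
    using q(2) by (intro scaled_norm_sum_singular_part_le[OF assms(1,3,5,6,4,7,8) C1 \<open>q < N\<close> q(2)]
        abs_XN_le_singular[OF sing]) (auto simp: XN_def)
  have "{0..N} = {0..q} \<union> {Suc q..N}" "{0..q} \<inter> {Suc q..N} = {}"
    using \<open>q < N\<close> by auto
  then have "real N powr \<alpha> * norm (\<Sum>l=0..N. c l * of_real (XN f N l))
      \<le> real N powr \<alpha> * norm (\<Sum>l=0..q. c l * of_real (XN f N l))
        + real N powr \<alpha> * norm (\<Sum>l = Suc q..N. c l * of_real (XN f N l))"
    by (simp add: sum.union_disjoint distrib_left[symmetric] norm_triangle_ineq mult_left_mono)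
  also have "\<dots> \<le> real N powr \<alpha> * (((A + B) * L * (\<Sum>l. real (Suc l) powr (-1 - \<alpha>)) + A * L) / real N)
      + A * K * 2 powr (1 + \<alpha>) * \<delta> powr (1 - \<gamma>) / (1 - \<gamma>)"
    using head tail by (intro add_mono mult_left_mono) auto
  finally show ?thesis
    using N by (simp add: powr_diff field_simps)
qed

lemma tendsto_zero_two_scale_bound:
  fixes a :: "nat \<Rightarrow> real"
  assumes "\<alpha> < 1" "\<gamma> < 1" "\<delta>0 > 0"
    and bound: "\<And>\<delta>. 0 < \<delta> \<Longrightarrow> \<delta> < \<delta>0 \<Longrightarrow> \<exists>C. \<forall>N\<ge>1. \<bar>a N\<bar> \<le> C * real N powr (\<alpha> - 1) + D * \<delta> powr (1 - \<gamma>)"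
  shows "a \<longlonglongrightarrow> 0"
proof (rule LIMSEQ_I)
  fix \<epsilon> :: real assume "\<epsilon> > 0"
  have "((\<lambda>d. D * d powr (1 - \<gamma>)) \<longlongrightarrow> D * 0) (at_right 0)"
    using assms(2) eventually_at_right_less[of "0::real"]
    by (intro tendsto_mult tendsto_const tendsto_zero_powrI tendsto_ident_at) (auto elim: eventually_mono)
  then have "eventually (\<lambda>d. D * d powr (1 - \<gamma>) < \<epsilon> / 2 \<and> d \<in> {0<..<\<delta>0}) (at_right 0)"
    using \<open>\<epsilon> > 0\<close> \<open>\<delta>0 > 0\<close> by (intro eventually_conj order_tendstoD(2) eventually_at_right_real) auto
  then obtain \<delta> where \<delta>: "D * \<delta> powr (1 - \<gamma>) < \<epsilon> / 2" "0 < \<delta>" "\<delta> < \<delta>0"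
    by (auto dest: eventually_happens)
  then obtain C where C: "\<And>N. N \<ge> 1 \<Longrightarrow> \<bar>a N\<bar> \<le> C * real N powr (\<alpha> - 1) + D * \<delta> powr (1 - \<gamma>)"
    using bound by blast
  have "(\<lambda>N. C * real N powr (\<alpha> - 1)) \<longlonglongrightarrow> C * 0"
    using assms(1) by (intro tendsto_mult tendsto_const tendsto_neg_powr filterlim_real_sequentially) auto
  then have "eventually (\<lambda>N. C * real N powr (\<alpha> - 1) < \<epsilon> / 2) sequentially"
    using \<open>\<epsilon> > 0\<close> by (intro order_tendstoD(2)) auto
  then obtain N0 where N0: "\<And>N. N \<ge> N0 \<Longrightarrow> C * real N powr (\<alpha> - 1) < \<epsilon> / 2"
    unfolding eventually_sequentially by blast
  have "norm (a N - 0) < \<epsilon>" if "N \<ge> max 1 N0" for N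
    using C[of N] N0[of N] \<delta>(1) that by simp
  then show "\<exists>N0. \<forall>N\<ge>N0. norm (a N - 0) < \<epsilon>"
    by blast
qed

lemma scaled_row_sum_tendsto_zero:
  fixes c :: "nat \<Rightarrow> complex" and f :: "real \<Rightarrow> real"
  assumes "A \<ge> 0" "B \<ge> 0" "0 < \<alpha>" "\<alpha> < 1" "0 \<le> \<gamma>" "\<gamma> < 1"
    and C1: "\<And>l. l \<ge> 1 \<Longrightarrow> norm (c l) \<le> A * real l powr (-1 - \<alpha>)"
    and C2: "\<And>l. norm (c l + c (Suc l)) \<le> B * real (Suc l) powr (-2 - \<alpha>)"
    and sing: "(\<lambda>y. f (1 - y)) \<in> O[at_right 0](\<lambda>y. y powr (-\<gamma>))"
    and lc: "locally_contracting f" and "f 0 = 0"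
  shows "(\<lambda>N. of_real (real N powr \<alpha>) * (\<Sum>l=0..N. c l * of_real (XN f N l))) \<longlonglongrightarrow> 0"
proof -
  obtain K where "K > 0" and "eventually (\<lambda>y. norm (f (1 - y)) \<le> K * norm (y powr (-\<gamma>))) (at_right 0)"
    using sing by (elim landau_o.bigE) blast
  then obtain \<delta>0 where "\<delta>0 > 0" and K: "\<And>y. 0 < y \<Longrightarrow> y < \<delta>0 \<Longrightarrow> \<bar>f (1 - y)\<bar> \<le> K * y powr (-\<gamma>)"
    using eventually_at_right[of 0 "1::real"] by auto
  have "(\<lambda>N. norm (of_real (real N powr \<alpha>) * (\<Sum>l=0..N. c l * of_real (XN f N l)))) \<longlonglongrightarrow> 0"
  proof (rule tendsto_zero_two_scale_bound[OF assms(4,6), of "min \<delta>0 (1/2)"])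
    fix \<delta> :: real assume \<delta>: "0 < \<delta>" "\<delta> < min \<delta>0 (1/2)"
    then obtain L where L: "L-lipschitz_on {0..1 - \<delta>} f"
      using lc unfolding locally_contracting_def by force
    show "\<exists>C. \<forall>N\<ge>1. \<bar>norm (of_real (real N powr \<alpha>) * (\<Sum>l=0..N. c l * of_real (XN f N l)))\<bar>
        \<le> C * real N powr (\<alpha> - 1) + A * K * 2 powr (1 + \<alpha>) / (1 - \<gamma>) * \<delta> powr (1 - \<gamma>)"
      using scaled_row_sum_bound[OF assms(1,2) _ assms(3,5,6) \<delta>(1) _ _ C1 C2 L \<open>f 0 = 0\<close> K] \<delta> \<open>K > 0\<close>
      by (auto simp: norm_mult)
  qed (use \<open>\<delta>0 > 0\<close> in simp)
  then show ?thesis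
    by (simp add: tendsto_norm_zero_iff)
qed

theorem mainTheorem3:
  fixes \<alpha> :: real and f :: "real \<Rightarrow> real"
  assumes "0 < \<alpha>" "\<alpha> < 1"
    and "L1_weight (1 - \<alpha>) f"
    and "locally_contracting f"
    and "f 0 = 0"
  shows "alpha_derivable \<alpha> f 0 \<and> D_alpha \<alpha> f 0 = 0"
proof -
  obtain A B where "A \<ge> 0" "B \<ge> 0"
    and "\<And>l. l \<ge> 1 \<Longrightarrow> norm (fourier_coeff (phi \<alpha>) (- int l)) \<le> A * real l powr (-1 - \<alpha>)"
    and "\<And>l. norm (fourier_coeff (phi \<alpha>) (- int l) + fourier_coeff (phi \<alpha>) (- int (Suc l)))
           \<le> B * real (Suc l) powr (-2 - \<alpha>)"
    using fourier_coeff_phi_bounds[OF assms(1)] by blast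
  moreover obtain \<gamma> where "0 \<le> \<gamma>" "\<gamma> \<le> 1 - \<alpha>" "(\<lambda>y. f (1 - y)) \<in> O[at_right 0](\<lambda>y. y powr (-\<gamma>))"
    using assms(3) unfolding L1_weight_def by auto
  ultimately have "alpha_seq \<alpha> f 0 \<longlonglongrightarrow> 0"
    unfolding alpha_seq_def toeplitz_entry_def using assms
    by (simp add: scaled_row_sum_tendsto_zero)
  then show ?thesis
    unfolding alpha_derivable_def D_alpha_def by (auto intro: limI)
qed

end
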